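(* For $n\in\{4,5\}$ and every $\varepsilon>0$, there exists a symmetric matrix $A\in\mathbb{R}^{n\times n}$ with $\max_{i,j}|a_{ij}|=1$ and a factorization $A=LTL^T$, where $L=(l_{ij})$ is unit lower triangular with first column $e_1$ and $|l_{ij}|\le 1$, and $T$ is symmetric tridiagonal, such that $\max_{i,j}|t_{ij}|>2^{n-1}-\varepsilon$. Consequently the bound $2^{n-1}$ on the growth factor $\max_{i,j}|t_{ij}|/\max_{i,j}|a_{ij}|$ can be approached arbitrarily closely for $n=4,5$.
   Context: $e_1$ denotes the first column of the $n\times n$ identity matrix. Such factorizations $A=LTL^T$ (with $A$ already permuted) are those produced by Aasen's algorithm. *)

theory Defs
  imports Complex_Main
begin

text \<open>n x n real matrices are represented as functions nat => nat => real,
  with only the entries i, j < n being meaningful (indices 0-based).\<close>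

definition max_abs_entry :: "nat \<Rightarrow> (nat \<Rightarrow> nat \<Rightarrow> real) \<Rightarrow> real" where
  "max_abs_entry n M = Max {\<bar>M i j\<bar> | i j. i < n \<and> j < n}"

definition symmetric_mat :: "nat \<Rightarrow> (nat \<Rightarrow> nat \<Rightarrow> real) \<Rightarrow> bool" where
  "symmetric_mat n M \<longleftrightarrow> (\<forall>i<n. \<forall>j<n. M i j = M j i)"

definition unit_lower_triangular :: "nat \<Rightarrow> (nat \<Rightarrow> nat \<Rightarrow> real) \<Rightarrow> bool" where
  "unit_lower_triangular n L \<longleftrightarrow>
     (\<forall>i<n. L i i = 1) \<and> (\<forall>i<n. \<forall>j<n. i < j \<longrightarrow> L i j = 0)"

definition tridiagonal :: "nat \<Rightarrow> (nat \<Rightarrow> nat \<Rightarrow> real) \<Rightarrow> bool" where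
  "tridiagonal n T \<longleftrightarrow> (\<forall>i<n. \<forall>j<n. i + 1 < j \<or> j + 1 < i \<longrightarrow> T i j = 0)"

definition LTLt :: "nat \<Rightarrow> (nat \<Rightarrow> nat \<Rightarrow> real) \<Rightarrow> (nat \<Rightarrow> nat \<Rightarrow> real) \<Rightarrow> nat \<Rightarrow> nat \<Rightarrow> real" where
  "LTLt n L T i j = (\<Sum>k<n. \<Sum>l<n. L i k * T k l * L j l)"

end

theory Submission
  imports Defs
begin

text \<open>The bound \<open>2^(n-1)\<close> is in fact attained for \<open>n = 4, 5\<close>, so no limiting
  family is needed: one singular witness per dimension suffices. Its first row and column
  vanish, the last diagonal entry of \<open>T\<close> is \<open>2^(n-1)\<close> with the entries of \<open>T\<close> halving
  up the band, and the multipliers \<open>\<plusminus>1\<close> in \<open>L\<close> cancel this growth so that every entry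
  of \<open>L T L^T\<close> has modulus at most 1.\<close>

lemma finite_abs_entries: "finite {\<bar>M i j\<bar> | i j. i < (n::nat) \<and> j < n}"
proof -
  have "{\<bar>M i j\<bar> | i j. i < n \<and> j < n} = (\<lambda>(i, j). \<bar>M i j\<bar>) ` ({..<n} \<times> {..<n})"
    by auto
  then show ?thesis by simp
qed

lemma max_abs_entry_eqI:
  assumes "\<forall>i<n. \<forall>j<n. \<bar>M i j\<bar> \<le> c" and "i0 < n" "j0 < n" "\<bar>M i0 j0\<bar> = c"
  shows "max_abs_entry n M = c"
  unfolding max_abs_entry_def
  by (rule Max_eqI[OF finite_abs_entries]) (use assms in force)+

definition aasen_factorization ::
    "nat \<Rightarrow> (nat \<Rightarrow> nat \<Rightarrow> real) \<Rightarrow> (nat \<Rightarrow> nat \<Rightarrow> real) \<Rightarrow> (nat \<Rightarrow> nat \<Rightarrow> real) \<Rightarrow> bool" where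
  "aasen_factorization n A L T \<longleftrightarrow>
     symmetric_mat n A \<and> max_abs_entry n A = 1 \<and>
     unit_lower_triangular n L \<and>
     (\<forall>i<n. L i 0 = (if i = 0 then 1 else 0)) \<and>
     (\<forall>i<n. \<forall>j<n. \<bar>L i j\<bar> \<le> 1) \<and>
     symmetric_mat n T \<and> tridiagonal n T \<and>
     (\<forall>i<n. \<forall>j<n. A i j = LTLt n L T i j)"

definition mat_of_rows :: "real list list \<Rightarrow> nat \<Rightarrow> nat \<Rightarrow> real" where
  "mat_of_rows rows i j = rows ! i ! j"

lemma all_less_4: "(\<forall>i<(4::nat). P i) \<longleftrightarrow> P 0 \<and> P 1 \<and> P 2 \<and> P 3"
  by (auto simp: numeral_eq_Suc less_Suc_eq)

lemma all_less_5: "(\<forall>i<(5::nat). P i) \<longleftrightarrow> P 0 \<and> P 1 \<and> P 2 \<and> P 3 \<and> P 4"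
  by (auto simp: numeral_eq_Suc less_Suc_eq)

lemma sum_lessThan_4: "(\<Sum>k<(4::nat). f k) = f 0 + f 1 + f 2 + (f 3 :: real)"
  by (simp add: numeral_eq_Suc lessThan_Suc)

lemma sum_lessThan_5: "(\<Sum>k<(5::nat). f k) = f 0 + f 1 + f 2 + f 3 + (f 4 :: real)"
  by (simp add: numeral_eq_Suc lessThan_Suc)

lemma aasen_growth_4:
  defines "A \<equiv> mat_of_rows [[0,0,0,0], [0,-1,-1,1], [0,-1,1,-1], [0,1,-1,1]]"
      and "L \<equiv> mat_of_rows [[1,0,0,0], [0,1,0,0], [0,1,1,0], [0,-1,1,1]]"
      and "T \<equiv> mat_of_rows [[0,0,0,0], [0,-1,0,0], [0,0,2,-4], [0,0,-4,8]]"
  shows "aasen_factorization 4 A L T" and "max_abs_entry 4 T = 8"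
proof -
  have "max_abs_entry 4 A = 1"
    by (rule max_abs_entry_eqI[of _ _ _ 1 1]) (simp_all add: all_less_4 A_def mat_of_rows_def)
  then show "aasen_factorization 4 A L T"
    by (simp add: aasen_factorization_def symmetric_mat_def unit_lower_triangular_def
        tridiagonal_def LTLt_def all_less_4 sum_lessThan_4 A_def L_def T_def mat_of_rows_def)
  show "max_abs_entry 4 T = 8"
    by (rule max_abs_entry_eqI[of _ _ _ 3 3]) (simp_all add: all_less_4 T_def mat_of_rows_def)
qed

lemma aasen_growth_5:
  defines "A \<equiv> mat_of_rows [[0,0,0,0,0], [0,-1/2,0,-1,-1], [0,0,-1,-1,-1], [0,-1,-1,1,1],
                             [0,-1,-1,1,1]]"
      and "L \<equiv> mat_of_rows [[1,0,0,0,0], [0,1,0,0,0], [0,-1,1,0,0], [0,1,1,1,0], [0,1,1,-1,1]]"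
      and "T \<equiv> mat_of_rows [[0,0,0,0,0], [0,-1/2,-1/2,0,0], [0,-1/2,-3/2,0,0], [0,0,0,4,8],
                             [0,0,0,8,16]]"
  shows "aasen_factorization 5 A L T" and "max_abs_entry 5 T = 16"
proof -
  have "max_abs_entry 5 A = 1"
    by (rule max_abs_entry_eqI[of _ _ _ 2 2]) (simp_all add: all_less_5 A_def mat_of_rows_def)
  then show "aasen_factorization 5 A L T"
    by (simp add: aasen_factorization_def symmetric_mat_def unit_lower_triangular_def
        tridiagonal_def LTLt_def all_less_5 sum_lessThan_5 A_def L_def T_def mat_of_rows_def)
  show "max_abs_entry 5 T = 16"
    by (rule max_abs_entry_eqI[of _ _ _ 4 4]) (simp_all add: all_less_5 T_def mat_of_rows_def)
qed

theorem mainTheorem3: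
  fixes n :: nat and \<epsilon> :: real
  assumes "n \<in> {4, 5}" and "\<epsilon> > 0"
  shows "\<exists>A L T :: nat \<Rightarrow> nat \<Rightarrow> real.
           symmetric_mat n A \<and> max_abs_entry n A = 1 \<and>
           unit_lower_triangular n L \<and>
           (\<forall>i<n. L i 0 = (if i = 0 then 1 else 0)) \<and>
           (\<forall>i<n. \<forall>j<n. \<bar>L i j\<bar> \<le> 1) \<and>
           symmetric_mat n T \<and> tridiagonal n T \<and>
           (\<forall>i<n. \<forall>j<n. A i j = LTLt n L T i j) \<and>
           max_abs_entry n T > 2 ^ (n - 1) - \<epsilon>"
proof -
  consider "n = 4" | "n = 5" using assms(1) by blast
  then have "\<exists>A L T. aasen_factorization n A L T \<and> max_abs_entry n T = 2 ^ (n - 1)"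
  proof cases
    case 1
    then show ?thesis using aasen_growth_4 by auto
  next
    case 2
    then show ?thesis using aasen_growth_5 by auto
  qed
  then obtain A L T
    where "aasen_factorization n A L T" and "max_abs_entry n T = 2 ^ (n - 1)"
    by blast
  with assms(2) show ?thesis
    unfolding aasen_factorization_def by (intro exI[of _ A] exI[of _ L] exI[of _ T]) simp
qed

end
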